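(* Let $R \subseteq S$ be an extension of commutative rings such that $S$ is generated as an $R$-module by $1, f_1, \ldots, f_n$ ($n>0$, $f_i\in S$), and suppose $S$ has an exact presentation $R^{\oplus q} \xrightarrow{\mathbb M} R^{\oplus(n+1)} \xrightarrow{\varepsilon} S \to 0$ with $q>0$ and $\varepsilon = [1\ f_1\ \cdots\ f_n]$. If $f_if_j \in R$ for all $1 \le i,j\le n$, then $R$ is strictly closed in $S$.
   Context: For an extension of commutative rings $R \subseteq S$, the strict closure of $R$ in $S$ is $R^* = \{\alpha \in S \mid \alpha\otimes 1 = 1\otimes \alpha \text{ in } S\otimes_R S\}$; $R$ is strictly closed in $S$ if $R=R^*$. *)

theory Defs
  imports Main
begin

text \<open>An extension of commutative rings R \<subseteq> S: S is the ambient type (a comm_ring_1),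
  R a subring given as a subset.\<close>
definition subring :: "'a::comm_ring_1 set \<Rightarrow> bool" where
  "subring R \<longleftrightarrow> 0 \<in> R \<and> 1 \<in> R \<and> (\<forall>x\<in>R. \<forall>y\<in>R. x + y \<in> R \<and> x * y \<in> R) \<and> (\<forall>x\<in>R. - x \<in> R)"

text \<open>Tensor product S \<otimes>_R S, constructed as the free abelian group on S \<times> S
  (finitely supported integer-valued functions) modulo the subgroup generated by the
  R-bilinearity relations.\<close>
definition tdelta :: "'a \<Rightarrow> 'a \<Rightarrow> ('a \<times> 'a \<Rightarrow> int)" where
  "tdelta s t = (\<lambda>p. if p = (s, t) then 1 else 0)"

definition tensor_gens :: "'a::comm_ring_1 set \<Rightarrow> ('a \<times> 'a \<Rightarrow> int) set" where
  "tensor_gens R =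
     {\<lambda>p. tdelta (s + s') t p - tdelta s t p - tdelta s' t p | s s' t. True}
   \<union> {\<lambda>p. tdelta s (t + t') p - tdelta s t p - tdelta s t' p | s t t'. True}
   \<union> {\<lambda>p. tdelta (r * s) t p - tdelta s (r * t) p | r s t. r \<in> R}"

inductive_set tensor_relations :: "'a::comm_ring_1 set \<Rightarrow> ('a \<times> 'a \<Rightarrow> int) set"
  for R :: "'a set" where
  zero: "(\<lambda>p. 0) \<in> tensor_relations R"
| gen: "g \<in> tensor_gens R \<Longrightarrow> g \<in> tensor_relations R"
| add: "x \<in> tensor_relations R \<Longrightarrow> y \<in> tensor_relations R \<Longrightarrow> (\<lambda>p. x p + y p) \<in> tensor_relations R"
| neg: "x \<in> tensor_relations R \<Longrightarrow> (\<lambda>p. - x p) \<in> tensor_relations R"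

definition tensor_eq :: "'a::comm_ring_1 set \<Rightarrow> 'a \<Rightarrow> 'a \<Rightarrow> 'a \<Rightarrow> 'a \<Rightarrow> bool" where
  "tensor_eq R s t s' t' \<longleftrightarrow> (\<lambda>p. tdelta s t p - tdelta s' t' p) \<in> tensor_relations R"

definition strict_closure :: "'a::comm_ring_1 set \<Rightarrow> 'a set" where
  "strict_closure R = {\<alpha>. tensor_eq R \<alpha> 1 1 \<alpha>}"

definition strictly_closed :: "'a::comm_ring_1 set \<Rightarrow> bool" where
  "strictly_closed R \<longleftrightarrow> strict_closure R = R"

end

theory Submission
  imports Defs
begin

text \<open>Every element of S is \<open>c\<^sub>0 + \<Sum> c\<^sub>i f\<^sub>i\<close> with coefficients in R, and by exactness the
  constant coefficient \<open>c\<^sub>0\<close> is determined modulo the ideal K of S generated by the first row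
  of the presentation matrix. Hence \<open>s \<otimes> t \<mapsto> s c\<^sub>0(t)\<close> is an R-balanced map into S/K, and
  applying it to \<open>a \<otimes> 1 = 1 \<otimes> a\<close> shows \<open>a \<equiv> c\<^sub>0(a)\<close> modulo K. Each column of the
  presentation is a relation \<open>M\<^sub>0\<^sub>j = - \<Sum> M\<^sub>i\<^sub>j f\<^sub>i\<close>, so when all products \<open>f\<^sub>i f\<^sub>k\<close> lie in R,
  the generators \<open>M\<^sub>0\<^sub>j\<close> multiply S into R, i.e. \<open>K \<subseteq> R\<close>, and therefore \<open>a \<in> R\<close>.\<close>

lemma subring_diff: "subring R \<Longrightarrow> x \<in> R \<Longrightarrow> y \<in> R \<Longrightarrow> x - y \<in> R"
  unfolding subring_def by (metis diff_conv_add_uminus)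

lemma subring_sum: "subring R \<Longrightarrow> (\<And>i. i \<in> A \<Longrightarrow> g i \<in> R) \<Longrightarrow> sum g A \<in> R"
  by (induction A rule: infinite_finite_induct) (auto simp: subring_def)

lemma strictly_closed_iff: "strictly_closed R \<longleftrightarrow> strict_closure R \<subseteq> R"
proof -
  have "r \<in> strict_closure R" if "r \<in> R" for r
  proof -
    have "(\<lambda>p. tdelta (r * 1) 1 p - tdelta 1 (r * 1) p) \<in> tensor_gens R"
      unfolding tensor_gens_def using that by blast
    then show ?thesis
      by (simp add: strict_closure_def tensor_eq_def tensor_relations.gen)
  qed
  then show ?thesis
    unfolding strictly_closed_def by blast
qed

definition lin_ext :: "('c \<Rightarrow> 'b::ring_1) \<Rightarrow> ('c \<Rightarrow> int) \<Rightarrow> 'b" where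
  "lin_ext B x = (\<Sum>p\<in>{p. x p \<noteq> 0}. of_int (x p) * B p)"

lemma finite_support_add:
  "finite {p. x p \<noteq> 0} \<Longrightarrow> finite {p. y p \<noteq> (0::int)} \<Longrightarrow> finite {p. x p + y p \<noteq> 0}"
  by (rule finite_subset[of _ "{p. x p \<noteq> 0} \<union> {p. y p \<noteq> 0}"]) auto

lemma finite_support_diff:
  "finite {p. x p \<noteq> 0} \<Longrightarrow> finite {p. y p \<noteq> (0::int)} \<Longrightarrow> finite {p. x p - y p \<noteq> 0}"
  by (rule finite_subset[of _ "{p. x p \<noteq> 0} \<union> {p. y p \<noteq> 0}"]) auto

lemma finite_support_tdelta: "finite {p. tdelta s t p \<noteq> 0}"
  by (rule finite_subset[of _ "{(s, t)}"]) (auto simp: tdelta_def)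

lemma tensor_relations_finite_support:
  "x \<in> tensor_relations R \<Longrightarrow> finite {p. x p \<noteq> 0}"
proof (induction rule: tensor_relations.induct)
  case (gen g)
  then show ?case
    unfolding tensor_gens_def
    by (auto intro!: finite_support_diff finite_support_tdelta)
qed (simp_all add: finite_support_add)

lemma lin_ext_eq_sum:
  assumes "finite A" "{p. x p \<noteq> 0} \<subseteq> A"
  shows "lin_ext B x = (\<Sum>p\<in>A. of_int (x p) * B p)"
  unfolding lin_ext_def
  by (rule sum.mono_neutral_left) (use assms in \<open>auto intro: finite_subset\<close>)

lemma lin_ext_add:
  assumes "finite {p. x p \<noteq> 0}" "finite {p. y p \<noteq> 0}"
  shows "lin_ext B (\<lambda>p. x p + y p) = lin_ext B x + lin_ext B y"
proof -
  let ?A = "{p. x p \<noteq> 0} \<union> {p. y p \<noteq> 0}"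
  have "lin_ext B (\<lambda>p. x p + y p) = (\<Sum>p\<in>?A. of_int (x p + y p) * B p)"
    by (rule lin_ext_eq_sum) (use assms in auto)
  also have "\<dots> = (\<Sum>p\<in>?A. of_int (x p) * B p) + (\<Sum>p\<in>?A. of_int (y p) * B p)"
    by (simp add: distrib_right sum.distrib)
  also have "\<dots> = lin_ext B x + lin_ext B y"
    using assms lin_ext_eq_sum[of ?A x B] lin_ext_eq_sum[of ?A y B] by simp
  finally show ?thesis .
qed

lemma lin_ext_uminus: "lin_ext B (\<lambda>p. - x p) = - lin_ext B x"
  by (simp add: lin_ext_def sum_negf)

lemma lin_ext_diff:
  assumes "finite {p. x p \<noteq> 0}" "finite {p. y p \<noteq> 0}"
  shows "lin_ext B (\<lambda>p. x p - y p) = lin_ext B x - lin_ext B y"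
  using lin_ext_add[of x "\<lambda>p. - y p" B] assms by (simp add: lin_ext_uminus)

lemma lin_ext_tdelta: "lin_ext B (tdelta s t) = B (s, t)"
proof -
  have "{p. tdelta s t p \<noteq> 0} = {(s, t)}"
    by (auto simp: tdelta_def)
  then show ?thesis
    by (simp add: lin_ext_def tdelta_def)
qed

lemma lin_ext_tdelta_diff: "lin_ext B (\<lambda>p. tdelta s t p - tdelta s' t' p) = B (s, t) - B (s', t')"
  by (simp add: lin_ext_diff finite_support_tdelta lin_ext_tdelta)

lemma lin_ext_tdelta_diff_diff:
  "lin_ext B (\<lambda>p. tdelta s t p - tdelta s' t' p - tdelta s'' t'' p) = B (s, t) - B (s', t') - B (s'', t'')"
  using lin_ext_diff[OF finite_support_diff[OF finite_support_tdelta finite_support_tdelta]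
      finite_support_tdelta, of B s t s' t' s'' t'']
  by (simp add: lin_ext_tdelta_diff lin_ext_tdelta)

text \<open>Membership in the subgroup K stands in for equality in the quotient of the target by K.\<close>
lemma tensor_eq_balanced_mod:
  fixes B :: "'a::comm_ring_1 \<Rightarrow> 'a \<Rightarrow> 'b::ring_1"
  assumes K_zero: "0 \<in> K"
    and K_add: "\<And>u v. u \<in> K \<Longrightarrow> v \<in> K \<Longrightarrow> u + v \<in> K"
    and K_uminus: "\<And>u. u \<in> K \<Longrightarrow> - u \<in> K"
    and add_left: "\<And>s s' t. B (s + s') t - B s t - B s' t \<in> K"
    and add_right: "\<And>s t t'. B s (t + t') - B s t - B s t' \<in> K"
    and balanced: "\<And>r s t. r \<in> R \<Longrightarrow> B (r * s) t - B s (r * t) \<in> K"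
    and eq: "tensor_eq R s t s' t'"
  shows "B s t - B s' t' \<in> K"
proof -
  let ?B = "\<lambda>(s, t). B s t"
  have "lin_ext ?B x \<in> K" if "x \<in> tensor_relations R" for x
    using that
  proof (induction rule: tensor_relations.induct)
    case zero
    then show ?case
      using K_zero by (simp add: lin_ext_def)
  next
    case (gen g)
    then show ?case
      unfolding tensor_gens_def
      by (auto simp: lin_ext_tdelta_diff lin_ext_tdelta_diff_diff add_left add_right balanced)
  next
    case (add x y)
    then show ?case
      by (simp add: lin_ext_add tensor_relations_finite_support K_add)
  next
    case (neg x)
    then show ?case
      by (simp add: lin_ext_uminus K_uminus)
  qed
  from this[of "\<lambda>p. tdelta s t p - tdelta s' t' p"] show ?thesis
    using eq by (simp add: tensor_eq_def lin_ext_tdelta_diff)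
qed

locale presented_extension =
  fixes R :: "'a::comm_ring_1 set" and f :: "nat \<Rightarrow> 'a" and n q :: nat
    and M :: "nat \<Rightarrow> nat \<Rightarrow> 'a"
  assumes subring: "subring R"
    and spanning: "\<forall>s. \<exists>c. (\<forall>i\<le>n. c i \<in> R) \<and> s = c 0 + (\<Sum>i=1..n. c i * f i)"
    and M_in_R: "\<forall>i\<le>n. \<forall>j<q. M i j \<in> R"
    and exact: "\<forall>c. (\<forall>i\<le>n. c i \<in> R) \<longrightarrow>
                 ((c 0 + (\<Sum>i=1..n. c i * f i) = 0) \<longleftrightarrow>
                  (\<exists>x. (\<forall>j<q. x j \<in> R) \<and> (\<forall>i\<le>n. c i = (\<Sum>j<q. M i j * x j))))"
begin

definition represents :: "(nat \<Rightarrow> 'a) \<Rightarrow> 'a \<Rightarrow> bool" where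
  "represents c s \<longleftrightarrow> (\<forall>i\<le>n. c i \<in> R) \<and> s = c 0 + (\<Sum>i=1..n. c i * f i)"

definition const_coeff :: "'a \<Rightarrow> 'a" where
  "const_coeff s = (SOME c. represents c s) 0"

definition first_row_ideal :: "'a set" where
  "first_row_ideal = range (\<lambda>z. \<Sum>j<q. M 0 j * z j)"

lemma represents_some: "represents (SOME c. represents c s) s"
proof -
  have "\<exists>c. represents c s"
    using spanning by (simp add: represents_def)
  then show ?thesis
    by (rule someI_ex)
qed

lemma const_coeff_in_R: "const_coeff s \<in> R"
  using represents_some[of s] by (simp add: const_coeff_def represents_def)

lemma represents_add: "represents c s \<Longrightarrow> represents d t \<Longrightarrow> represents (\<lambda>i. c i + d i) (s + t)"
  using subring by (simp add: represents_def subring_def distrib_right sum.distrib add_ac)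

lemma represents_scale: "r \<in> R \<Longrightarrow> represents c s \<Longrightarrow> represents (\<lambda>i. r * c i) (r * s)"
  using subring by (simp add: represents_def subring_def distrib_left sum_distrib_left mult.assoc)

lemma represents_one: "represents (\<lambda>i. if i = 0 then 1 else 0) 1"
  using subring by (simp add: represents_def subring_def)

lemma first_row_ideal_zero: "0 \<in> first_row_ideal"
  unfolding first_row_ideal_def by (rule range_eqI[of _ _ "\<lambda>_. 0"]) simp

lemma first_row_ideal_add:
  assumes "u \<in> first_row_ideal" "v \<in> first_row_ideal"
  shows "u + v \<in> first_row_ideal"
proof -
  obtain z z' where "u = (\<Sum>j<q. M 0 j * z j)" "v = (\<Sum>j<q. M 0 j * z' j)"
    using assms unfolding first_row_ideal_def by blast
  then have "u + v = (\<Sum>j<q. M 0 j * (z j + z' j))"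
    by (simp add: distrib_left sum.distrib)
  then show ?thesis
    unfolding first_row_ideal_def by (rule range_eqI[where x = "\<lambda>j. z j + z' j"])
qed

lemma first_row_ideal_mult:
  assumes "u \<in> first_row_ideal"
  shows "s * u \<in> first_row_ideal"
proof -
  obtain z where "u = (\<Sum>j<q. M 0 j * z j)"
    using assms unfolding first_row_ideal_def by blast
  then have "s * u = (\<Sum>j<q. M 0 j * (s * z j))"
    by (simp add: sum_distrib_left mult.left_commute)
  then show ?thesis
    unfolding first_row_ideal_def by (rule range_eqI[where x = "\<lambda>j. s * z j"])
qed

lemma first_row_ideal_uminus: "u \<in> first_row_ideal \<Longrightarrow> - u \<in> first_row_ideal"
  using first_row_ideal_mult[of u "-1"] by simp

lemma first_row_ideal_diff:
  "u \<in> first_row_ideal \<Longrightarrow> v \<in> first_row_ideal \<Longrightarrow> u - v \<in> first_row_ideal"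
  using first_row_ideal_add[OF _ first_row_ideal_uminus] by simp

lemma represents_unique_mod:
  assumes "represents c s" "represents d s"
  shows "c 0 - d 0 \<in> first_row_ideal"
proof -
  have "(c 0 - d 0) + (\<Sum>i=1..n. (c i - d i) * f i)
      = (c 0 + (\<Sum>i=1..n. c i * f i)) - (d 0 + (\<Sum>i=1..n. d i * f i))"
    by (simp add: left_diff_distrib sum_subtractf)
  also have "\<dots> = 0"
    using assms by (simp add: represents_def)
  finally have "(c 0 - d 0) + (\<Sum>i=1..n. (c i - d i) * f i) = 0" .
  moreover have "\<forall>i\<le>n. c i - d i \<in> R"
    using assms subring by (simp add: represents_def subring_diff)
  ultimately obtain x where "\<forall>i\<le>n. c i - d i = (\<Sum>j<q. M i j * x j)"
    using exact by fastforce
  then show ?thesis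
    unfolding first_row_ideal_def by auto
qed

lemma const_coeff_mod: "represents c s \<Longrightarrow> const_coeff s - c 0 \<in> first_row_ideal"
  unfolding const_coeff_def by (rule represents_unique_mod[OF represents_some])

lemma const_coeff_add_mod: "const_coeff (s + t) - const_coeff s - const_coeff t \<in> first_row_ideal"
  using const_coeff_mod[OF represents_add[OF represents_some represents_some]]
  by (simp add: const_coeff_def diff_diff_eq)

lemma const_coeff_scale_mod:
  "r \<in> R \<Longrightarrow> r * const_coeff t - const_coeff (r * t) \<in> first_row_ideal"
  using first_row_ideal_uminus[OF const_coeff_mod[OF represents_scale[OF _ represents_some]]]
  by (simp add: const_coeff_def)

lemma const_coeff_one_mod: "const_coeff 1 - 1 \<in> first_row_ideal"
  using const_coeff_mod[OF represents_one] by simp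

lemma strict_closure_mod:
  assumes "a \<in> strict_closure R"
  shows "a - const_coeff a \<in> first_row_ideal"
proof -
  have "a * const_coeff 1 - 1 * const_coeff a \<in> first_row_ideal"
  proof (rule tensor_eq_balanced_mod[where B = "\<lambda>s t. s * const_coeff t"])
    show "s * const_coeff (t + t') - s * const_coeff t - s * const_coeff t' \<in> first_row_ideal"
      for s t t'
      using first_row_ideal_mult[OF const_coeff_add_mod] by (simp add: right_diff_distrib)
    show "r * s * const_coeff t - s * const_coeff (r * t) \<in> first_row_ideal"
      if "r \<in> R" for r s t
      using first_row_ideal_mult[OF const_coeff_scale_mod[OF that], of s t]
      by (simp add: right_diff_distrib mult.assoc mult.left_commute)
  qed (use assms in \<open>simp_all add: strict_closure_def first_row_ideal_zero first_row_ideal_add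
      first_row_ideal_uminus distrib_right\<close>)
  moreover have "a * (const_coeff 1 - 1) \<in> first_row_ideal"
    by (rule first_row_ideal_mult[OF const_coeff_one_mod])
  ultimately show ?thesis
    using first_row_ideal_diff by (fastforce simp: right_diff_distrib)
qed

lemma column_relation:
  assumes "j < q"
  shows "M 0 j + (\<Sum>i=1..n. M i j * f i) = 0"
proof -
  let ?x = "\<lambda>j'. if j' = j then 1 else 0"
  have "\<forall>j'<q. ?x j' \<in> R"
    using subring by (simp add: subring_def)
  moreover have "\<forall>i\<le>n. M i j = (\<Sum>j'<q. M i j' * ?x j')"
    using assms by (simp add: if_distrib cong: if_cong)
  ultimately have "\<exists>x. (\<forall>j'<q. x j' \<in> R) \<and> (\<forall>i\<le>n. M i j = (\<Sum>j'<q. M i j' * x j'))"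
    by (rule exI[of _ ?x, OF conjI])
  moreover have "\<forall>i\<le>n. M i j \<in> R"
    using M_in_R assms by simp
  ultimately show ?thesis
    using spec[OF exact, of "\<lambda>i. M i j"] by simp
qed

text \<open>Multiplying the column relation by \<open>f\<^sub>k\<close> expresses \<open>M\<^sub>0\<^sub>j f\<^sub>k\<close> through the products \<open>f\<^sub>i f\<^sub>k\<close>.\<close>
lemma first_row_mult_in_R:
  assumes prods: "\<forall>i\<in>{1..n}. \<forall>k\<in>{1..n}. f i * f k \<in> R" and "j < q"
  shows "M 0 j * s \<in> R"
proof -
  have Mf: "M 0 j * f k \<in> R" if "k \<in> {1..n}" for k
  proof -
    have "M 0 j * f k = - (\<Sum>i=1..n. M i j * (f i * f k))"
      using column_relation[OF \<open>j < q\<close>]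
      by (simp add: eq_neg_iff_add_eq_0[symmetric] sum_distrib_right mult.assoc)
    moreover have "(\<Sum>i=1..n. M i j * (f i * f k)) \<in> R"
      using subring M_in_R prods that \<open>j < q\<close> by (intro subring_sum) (auto simp: subring_def)
    ultimately show ?thesis
      using subring by (simp add: subring_def)
  qed
  obtain c where c: "represents c s"
    using represents_some by blast
  then have "M 0 j * s = M 0 j * c 0 + (\<Sum>i=1..n. c i * (M 0 j * f i))"
    by (simp add: represents_def distrib_left sum_distrib_left mult.left_commute)
  moreover have "(\<Sum>i=1..n. c i * (M 0 j * f i)) \<in> R"
    using subring c Mf by (intro subring_sum) (auto simp: represents_def subring_def)
  moreover have "M 0 j * c 0 \<in> R"
    using subring c M_in_R \<open>j < q\<close> by (auto simp: represents_def subring_def)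
  ultimately show ?thesis
    using subring by (simp add: subring_def)
qed

lemma first_row_ideal_subset:
  "\<forall>i\<in>{1..n}. \<forall>k\<in>{1..n}. f i * f k \<in> R \<Longrightarrow> first_row_ideal \<subseteq> R"
  unfolding first_row_ideal_def using subring
  by (auto intro!: subring_sum first_row_mult_in_R)

lemma strictly_closed_if_products_in_R:
  assumes "\<forall>i\<in>{1..n}. \<forall>k\<in>{1..n}. f i * f k \<in> R"
  shows "strictly_closed R"
  unfolding strictly_closed_iff
proof
  fix a assume "a \<in> strict_closure R"
  then have "a - const_coeff a \<in> R"
    using strict_closure_mod first_row_ideal_subset[OF assms] by blast
  then show "a \<in> R"
    using subring const_coeff_in_R[of a] by (metis diff_add_cancel subring_def)
qed

end

theorem corollary2p7:
  fixes R :: "'a::comm_ring_1 set" and f :: "nat \<Rightarrow> 'a" and n q :: nat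
    and M :: "nat \<Rightarrow> nat \<Rightarrow> 'a"
  assumes sub: "subring R"
    and npos: "n > 0" and qpos: "q > 0"
    and gen: "\<forall>s. \<exists>c. (\<forall>i\<le>n. c i \<in> R) \<and> s = c 0 + (\<Sum>i=1..n. c i * f i)"
    and M_R: "\<forall>i\<le>n. \<forall>j<q. M i j \<in> R"
    and exact: "\<forall>c. (\<forall>i\<le>n. c i \<in> R) \<longrightarrow>
                 ((c 0 + (\<Sum>i=1..n. c i * f i) = 0) \<longleftrightarrow>
                  (\<exists>x. (\<forall>j<q. x j \<in> R) \<and> (\<forall>i\<le>n. c i = (\<Sum>j<q. M i j * x j))))"
    and prods: "\<forall>i\<in>{1..n}. \<forall>j\<in>{1..n}. f i * f j \<in> R"
  shows "strictly_closed R"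
proof -
  interpret presented_extension R f n q M
    using sub gen M_R exact by unfold_locales
  show ?thesis
    using prods by (rule strictly_closed_if_products_in_R)
qed

end
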